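(* Let $M$ be a timelike surface in $\mathbb{R}^{3,1}$ with a canonical null direction with respect to a constant unit spacelike vector $Z$, such that $II(Z^\top,Z^\top)\neq0$ everywhere. Then the normal curvature of $M$ is $$K_N=a\,|II(Z^\top,Z^\top)|.$$
   Context: $\mathbb{R}^{3,1}$ is $\mathbb{R}^{4}$ with the metric $-dx_1^2+dx_2^2+dx_3^2+dx_4^2$. A surface is timelike if the induced metric has signature $(1,1)$ (its normal bundle is then spacelike); a vector $v$ is lightlike if $v\ne0$ and $\langle v,v\rangle=0$. For a constant vector $Z$, $Z=Z^\top+Z^\perp$ along $M$; $M$ has a canonical null direction with respect to $Z$ if $Z^\top$ is lightlike everywhere on $M$. $W$ is the unique lightlike tangent field with $\langle Z^\top,W\rangle=-1$; $a:=\langle II(W,W),Z^\perp\rangle$ with $II$ the second fundamental form; $A_\xi$ is the shape operator, $\langle A_\xi X,Y\rangle=\langle II(X,Y),\xi\rangle$. Set $\nu:=II(Z^\top,Z^\top)/|II(Z^\top,Z^\top)|$ (a unit normal orthogonal to $Z^\perp$), $e_1=(Z^\top+W)/\sqrt2$, $e_2=(Z^\top-W)/\sqrt2$. The normal curvature is defined as $K_N:=\langle (A_{Z^\perp}\circ A_\nu-A_\nu\circ A_{Z^\perp})(e_1),e_2\rangle$. *)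

theory Defs
  imports "HOL-Analysis.Analysis"
begin

definition mink :: "real^4 \<Rightarrow> real^4 \<Rightarrow> real" where
  "mink x y = (\<Sum>i\<in>UNIV. (if i = 1 then -1 else 1) * (x $ i * y $ i))"

definition lightlike :: "real^4 \<Rightarrow> bool" where
  "lightlike v \<longleftrightarrow> v \<noteq> 0 \<and> mink v v = 0"

definition mnorm :: "real^4 \<Rightarrow> real" where
  "mnorm v = sqrt (mink v v)"

text \<open>The 2-jet of a parametrisation f(u,v) at a point: f_u, f_v, f_uu, f_uv, f_vu, f_vv.\<close>
record jet =
  ju :: "real^4"
  jv :: "real^4"
  juu :: "real^4"
  juv :: "real^4"
  jvu :: "real^4"
  jvv :: "real^4"

definition jet_at ::
  "(real\<times>real \<Rightarrow> real^4) \<Rightarrow> (real\<times>real \<Rightarrow> real^4) \<Rightarrow> (real\<times>real \<Rightarrow> real^4) \<Rightarrow>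
   (real\<times>real \<Rightarrow> real^4) \<Rightarrow> (real\<times>real \<Rightarrow> real^4) \<Rightarrow> (real\<times>real \<Rightarrow> real^4) \<Rightarrow> real\<times>real \<Rightarrow> jet" where
  "jet_at fu fv fuu fuv fvu fvv p =
     \<lparr>ju = fu p, jv = fv p, juu = fuu p, juv = fuv p, jvu = fvu p, jvv = fvv p\<rparr>"

definition tspace :: "jet \<Rightarrow> (real^4) set" where
  "tspace J = span {ju J, jv J}"

definition nspace :: "jet \<Rightarrow> (real^4) set" where
  "nspace J = {n. mink n (ju J) = 0 \<and> mink n (jv J) = 0}"

definition timelike_at :: "jet \<Rightarrow> bool" where
  "timelike_at J \<longleftrightarrow> independent {ju J, jv J} \<and> ju J \<noteq> jv J \<and>
     (\<exists>X\<in>tspace J. mink X X < 0) \<and> (\<exists>Y\<in>tspace J. mink Y Y > 0)"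

definition tanpart :: "jet \<Rightarrow> real^4 \<Rightarrow> real^4" where
  "tanpart J x = (THE t. t \<in> tspace J \<and> x - t \<in> nspace J)"

definition norpart :: "jet \<Rightarrow> real^4 \<Rightarrow> real^4" where
  "norpart J x = x - tanpart J x"

definition coords :: "jet \<Rightarrow> real^4 \<Rightarrow> real \<times> real" where
  "coords J X = (THE ab. X = fst ab *\<^sub>R ju J + snd ab *\<^sub>R jv J)"

definition sff :: "jet \<Rightarrow> real^4 \<Rightarrow> real^4 \<Rightarrow> real^4" where
  "sff J X Y = (let (a, b) = coords J X; (c, d) = coords J Y in
     norpart J ((a * c) *\<^sub>R juu J + (a * d) *\<^sub>R juv J + (b * c) *\<^sub>R jvu J + (b * d) *\<^sub>R jvv J))"

definition shape :: "jet \<Rightarrow> real^4 \<Rightarrow> real^4 \<Rightarrow> real^4" where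
  "shape J xi X = (THE t. t \<in> tspace J \<and> (\<forall>Y\<in>tspace J. mink t Y = mink (sff J X Y) xi))"

definition ZT :: "jet \<Rightarrow> real^4 \<Rightarrow> real^4" where
  "ZT J Z = tanpart J Z"

definition ZN :: "jet \<Rightarrow> real^4 \<Rightarrow> real^4" where
  "ZN J Z = norpart J Z"

definition Wvec :: "jet \<Rightarrow> real^4 \<Rightarrow> real^4" where
  "Wvec J Z = (THE w. w \<in> tspace J \<and> lightlike w \<and> mink (ZT J Z) w = -1)"

definition acoef :: "jet \<Rightarrow> real^4 \<Rightarrow> real" where
  "acoef J Z = mink (sff J (Wvec J Z) (Wvec J Z)) (ZN J Z)"

definition nuvec :: "jet \<Rightarrow> real^4 \<Rightarrow> real^4" where
  "nuvec J Z = (1 / mnorm (sff J (ZT J Z) (ZT J Z))) *\<^sub>R sff J (ZT J Z) (ZT J Z)"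

definition e1vec :: "jet \<Rightarrow> real^4 \<Rightarrow> real^4" where
  "e1vec J Z = (1 / sqrt 2) *\<^sub>R (ZT J Z + Wvec J Z)"

definition e2vec :: "jet \<Rightarrow> real^4 \<Rightarrow> real^4" where
  "e2vec J Z = (1 / sqrt 2) *\<^sub>R (ZT J Z - Wvec J Z)"

definition normal_curvature :: "jet \<Rightarrow> real^4 \<Rightarrow> real" where
  "normal_curvature J Z = mink
     (shape J (ZN J Z) (shape J (nuvec J Z) (e1vec J Z))
      - shape J (nuvec J Z) (shape J (ZN J Z) (e1vec J Z)))
     (e2vec J Z)"

end

theory Submission
  imports Defs
begin

(* Since Z is constant, differentiating <Z^T, Z^T> = 0 along the surface gives
   <II(Z^T, X), Z^perp> = 0 for every tangent X, i.e. A_{Z^perp} Z^T = 0; in particular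
   II(Z^T, Z^T), hence nu, is orthogonal to Z^perp. In the null frame (Z^T, W) the commutator
   [A_{Z^perp}, A_nu] only involves the diagonal entries of the two second fundamental forms:
   K_N = <II(Z^T,Z^T), nu> <II(W,W), Z^perp> - <II(Z^T,Z^T), Z^perp> <II(W,W), nu>,
   and the second term vanishes while the first is |II(Z^T,Z^T)| a.
   The symmetry of II needed for this is Young's theorem on mixed partial derivatives. *)

section \<open>The Minkowski inner product\<close>

lemma mink_expand: "mink x y = - (x$1 * y$1) + x$2 * y$2 + x$3 * y$3 + x$4 * y$4"
  unfolding mink_def sum_4 by simp

lemma mink_commute: "mink x y = mink y x"
  unfolding mink_expand by (simp add: mult.commute)

lemma bounded_bilinear_mink: "bounded_bilinear mink"
proof
  fix a a' b b' :: "real^4" and r :: real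
  show "mink (a + a') b = mink a b + mink a' b" "mink a (b + b') = mink a b + mink a b'"
    "mink (r *\<^sub>R a) b = r *\<^sub>R mink a b" "mink a (r *\<^sub>R b) = r *\<^sub>R mink a b"
    by (simp_all add: mink_expand algebra_simps)
  show "\<exists>K. \<forall>a b. norm (mink a b) \<le> norm a * norm b * K"
  proof (intro exI allI)
    fix a b :: "real^4"
    have "mink a b = inner a b - 2 * (a$1 * b$1)"
      unfolding mink_expand inner_vec_def sum_4 by simp
    moreover have "\<bar>a$1 * b$1\<bar> \<le> norm a * norm b"
      unfolding abs_mult by (intro mult_mono component_le_norm_cart) auto
    ultimately show "norm (mink a b) \<le> norm a * norm b * 3"
      using Cauchy_Schwarz_ineq2[of a b] by simp
  qed
qed

interpretation mink: bounded_bilinear mink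
  by (rule bounded_bilinear_mink)

lemmas mink_lin = mink.add_left mink.add_right mink.diff_left mink.diff_right
  mink.scaleR_left mink.scaleR_right mink.minus_left mink.minus_right mink.zero_left mink.zero_right

lemma mink_orthogonal_timelike_nonneg:
  assumes X: "mink X X < 0" and nX: "mink n X = 0"
  shows "mink n n \<ge> 0"
proof -
  let ?s = "n$2 * X$2 + n$3 * X$3 + n$4 * X$4"
  let ?N = "n$2^2 + n$3^2 + n$4^2"
  let ?X = "X$2^2 + X$3^2 + X$4^2"
  have "?N * ?X - ?s^2 = (n$2*X$3 - n$3*X$2)^2 + (n$2*X$4 - n$4*X$2)^2 + (n$3*X$4 - n$4*X$3)^2"
    by (simp add: power2_eq_square algebra_simps)
  then have cs: "?s^2 \<le> ?N * ?X"
    by (smt (verit) zero_le_power2)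
  have Xlt: "?X < X$1^2" using X unfolding mink_expand by (simp add: power2_eq_square)
  have "n$1 * X$1 = ?s" using nX unfolding mink_expand by simp
  then have "n$1^2 * X$1^2 = ?s^2" by (metis power_mult_distrib)
  also have "\<dots> \<le> ?N * X$1^2"
    using cs Xlt by (smt (verit) mult_left_mono zero_le_power2)
  finally have "n$1^2 \<le> ?N"
    using Xlt by (smt (verit) mult_le_cancel_right zero_le_power2)
  then show ?thesis unfolding mink_expand by (simp add: power2_eq_square)
qed

section \<open>Symmetry of mixed partial derivatives\<close>

lemma mvt_second_difference:
  fixes f :: "'b::real_normed_vector \<Rightarrow> 'a::real_inner"
  assumes s: "0 < s"
    and df: "\<And>q. q \<in> U \<Longrightarrow> (f has_derivative F q) (at q)"
    and inU: "\<And>t. t \<in> {0..s} \<Longrightarrow> x + t *\<^sub>R w + y \<in> U \<and> x + t *\<^sub>R w \<in> U"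
    and bnd: "\<And>t. t \<in> {0<..<s} \<Longrightarrow> norm (F (x + t *\<^sub>R w + y) w - F (x + t *\<^sub>R w) w - K) \<le> B"
  shows "norm (f (x + s *\<^sub>R w + y) - f (x + s *\<^sub>R w) - f (x + y) + f x - s *\<^sub>R K) \<le> s * B"
proof -
  define g where "g t = f (x + t *\<^sub>R w + y) - f (x + t *\<^sub>R w) - t *\<^sub>R K" for t
  have der: "(g has_derivative (\<lambda>h. h *\<^sub>R (F (x + t *\<^sub>R w + y) w - F (x + t *\<^sub>R w) w - K))) (at t)"
    if t: "t \<in> {0..s}" for t
  proof -
    have d1: "(f has_derivative F (x + t *\<^sub>R w + y)) (at (x + t *\<^sub>R w + y))"
     and d2: "(f has_derivative F (x + t *\<^sub>R w)) (at (x + t *\<^sub>R w))"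
      using df inU[OF t] by blast+
    have l1: "linear (F (x + t *\<^sub>R w + y))" and l2: "linear (F (x + t *\<^sub>R w))"
      using d1 d2 has_derivative_linear by blast+
    have "((\<lambda>t. x + t *\<^sub>R w + y) has_derivative (\<lambda>h. h *\<^sub>R w)) (at t)"
      and "((\<lambda>t. x + t *\<^sub>R w) has_derivative (\<lambda>h. h *\<^sub>R w)) (at t)"
      by (auto intro!: derivative_eq_intros)
    from has_derivative_compose[OF this(1) d1] has_derivative_compose[OF this(2) d2]
    have "(g has_derivative (\<lambda>h. F (x + t *\<^sub>R w + y) (h *\<^sub>R w) - F (x + t *\<^sub>R w) (h *\<^sub>R w) - h *\<^sub>R K)) (at t)"
      unfolding g_def o_def by (auto intro!: derivative_eq_intros)
    then show ?thesis
      using linear_scale[OF l1] linear_scale[OF l2] by (simp add: algebra_simps)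
  qed
  have "continuous_on {0..s} g"
    using der by (intro continuous_at_imp_continuous_on) (meson has_derivative_continuous)
  then obtain t where t: "t \<in> {0<..<s}" and
    le: "norm (g s - g 0) \<le> norm ((s - 0) *\<^sub>R (F (x + t *\<^sub>R w + y) w - F (x + t *\<^sub>R w) w - K))"
    using mvt_general[OF s, of g "\<lambda>t h. h *\<^sub>R (F (x + t *\<^sub>R w + y) w - F (x + t *\<^sub>R w) w - K)"] der
    by auto
  moreover have "g s - g 0 = f (x + s *\<^sub>R w + y) - f (x + s *\<^sub>R w) - f (x + y) + f x - s *\<^sub>R K"
    unfolding g_def by (simp add: algebra_simps)
  ultimately show ?thesis
    using bnd[OF t] s by (simp add: mult_left_mono order_trans)
qed

lemma mixed_difference_estimate:
  fixes f fu fv :: "real \<times> real \<Rightarrow> 'a::real_inner"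
  assumes U: "open U" "p \<in> U"
    and df: "\<forall>q\<in>U. (f has_derivative (\<lambda>h. fst h *\<^sub>R fu q + snd h *\<^sub>R fv q)) (at q)"
    and du: "(fu has_derivative (\<lambda>h. fst h *\<^sub>R a + snd h *\<^sub>R b)) (at p)"
    and e: "e > 0"
  shows "\<exists>d>0. \<forall>s. 0 < s \<and> s < d \<longrightarrow>
    norm (f (p + (s, s)) - f (p + (s, 0)) - f (p + (0, s)) + f p - (s * s) *\<^sub>R b) \<le> 4 * e * (s * s)"
proof -
  obtain d1 where d1: "d1 > 0" "\<forall>y. norm (y - p) < d1 \<longrightarrow>
      norm (fu y - fu p - (fst (y - p) *\<^sub>R a + snd (y - p) *\<^sub>R b)) \<le> e * norm (y - p)"
    using du[unfolded has_derivative_at_alt] e by blast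
  obtain r where r: "r > 0" "ball p r \<subseteq> U" using U open_contains_ball by blast
  define F where "F q = (\<lambda>h::real \<times> real. fst h *\<^sub>R fu q + snd h *\<^sub>R fv q)" for q
  have "norm (f (p + (s, s)) - f (p + (s, 0)) - f (p + (0, s)) + f p - (s * s) *\<^sub>R b) \<le> 4 * e * (s * s)"
    if s: "0 < s" "s < min d1 r / 2" for s
  proof -
    have small: "norm ((t1, t2)::real \<times> real) < min d1 r" if "\<bar>t1\<bar> \<le> s" "\<bar>t2\<bar> \<le> s" for t1 t2
      using norm_Pair_le[of t1 t2] that s by simp
    have inU: "p + (t1, t2) \<in> U" if "\<bar>t1\<bar> \<le> s" "\<bar>t2\<bar> \<le> s" for t1 t2
    proof -
      have "dist p (p + (t1, t2)) < r" using small[OF that] by (simp add: dist_norm norm_Pair)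
      then show ?thesis using r(2) by auto
    qed
    have lin: "norm (fu (p + (t1, t2)) - fu p - (t1 *\<^sub>R a + t2 *\<^sub>R b)) \<le> e * (2 * s)"
      if "\<bar>t1\<bar> \<le> s" "\<bar>t2\<bar> \<le> s" for t1 t2
    proof -
      have "norm (fu (p + (t1, t2)) - fu p - (t1 *\<^sub>R a + t2 *\<^sub>R b)) \<le> e * norm ((t1, t2)::real \<times> real)"
        using d1(2)[rule_format, of "p + (t1, t2)"] small[OF that] by simp
      also have "\<dots> \<le> e * (2 * s)"
        using norm_Pair_le[of t1 t2] that e by (intro mult_left_mono) auto
      finally show ?thesis .
    qed
    have "norm (f (p + s *\<^sub>R (1, 0) + (0, s)) - f (p + s *\<^sub>R (1, 0)) - f (p + (0, s)) + f p
        - s *\<^sub>R (s *\<^sub>R b)) \<le> s * (4 * e * s)"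
    proof (rule mvt_second_difference[OF s(1)])
      show "(f has_derivative F q) (at q)" if "q \<in> U" for q
        using df that by (simp add: F_def)
      fix t assume t: "t \<in> {0..s}"
      then show "p + t *\<^sub>R (1, 0) + (0, s) \<in> U \<and> p + t *\<^sub>R (1, 0) \<in> U"
        using inU[of t s] inU[of t 0] s by (auto simp: add.assoc)
    next
      fix t assume t: "t \<in> {0<..<s}"
      have "fu (p + (t, s)) - fu (p + (t, 0)) - s *\<^sub>R b
          = (fu (p + (t, s)) - fu p - (t *\<^sub>R a + s *\<^sub>R b)) - (fu (p + (t, 0)) - fu p - (t *\<^sub>R a + 0 *\<^sub>R b))"
        by (simp add: algebra_simps)
      also have "norm \<dots> \<le> e * (2 * s) + e * (2 * s)"
        using norm_triangle_ineq4 lin[of t s] lin[of t 0] t s by (smt (verit) greaterThanLessThan_iff abs_of_pos)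
      finally show "norm (F (p + t *\<^sub>R (1, 0) + (0, s)) (1, 0) - F (p + t *\<^sub>R (1, 0)) (1, 0) - s *\<^sub>R b)
          \<le> 4 * e * s"
        by (simp add: F_def add.assoc)
    qed
    then show ?thesis by (simp add: algebra_simps)
  qed
  moreover have "min d1 r / 2 > 0" using d1 r by simp
  ultimately show ?thesis by blast
qed

(* Young's theorem: no continuity of the second derivatives is needed. The estimate for fv is
   the one for fu applied to f \<circ> prod.swap. *)
lemma mixed_partials_eq:
  fixes f fu fv :: "real \<times> real \<Rightarrow> 'a::real_inner"
  assumes U: "open U" "p \<in> U"
    and df: "\<forall>q\<in>U. (f has_derivative (\<lambda>h. fst h *\<^sub>R fu q + snd h *\<^sub>R fv q)) (at q)"
    and du: "(fu has_derivative (\<lambda>h. fst h *\<^sub>R a + snd h *\<^sub>R b)) (at p)"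
    and dv: "(fv has_derivative (\<lambda>h. fst h *\<^sub>R c + snd h *\<^sub>R d)) (at p)"
  shows "b = c"
proof (rule ccontr)
  assume "b \<noteq> c"
  define e where "e = norm (b - c) / 10"
  have e: "e > 0" using \<open>b \<noteq> c\<close> by (simp add: e_def)
  obtain p1 p2 where p: "p = (p1, p2)" by fastforce
  have swap_deriv: "(prod.swap has_derivative prod.swap) (at q)" for q :: "real \<times> real"
    by (auto intro!: derivative_eq_intros simp: prod.swap_def[abs_def])
  have dfs: "\<forall>q\<in>prod.swap -` U. ((f \<circ> prod.swap) has_derivative
      (\<lambda>h. fst h *\<^sub>R (fv \<circ> prod.swap) q + snd h *\<^sub>R (fu \<circ> prod.swap) q)) (at q)"
  proof
    fix q assume "q \<in> prod.swap -` U"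
    then have "(f has_derivative (\<lambda>h. fst h *\<^sub>R fu (prod.swap q) + snd h *\<^sub>R fv (prod.swap q)))
        (at (prod.swap q))" using df by auto
    from has_derivative_compose[OF swap_deriv this]
    show "((f \<circ> prod.swap) has_derivative
        (\<lambda>h. fst h *\<^sub>R (fv \<circ> prod.swap) q + snd h *\<^sub>R (fu \<circ> prod.swap) q)) (at q)"
      by (simp add: o_def add.commute)
  qed
  have dvs: "((fv \<circ> prod.swap) has_derivative (\<lambda>h. fst h *\<^sub>R d + snd h *\<^sub>R c)) (at (prod.swap p))"
  proof -
    have "(fv has_derivative (\<lambda>h. fst h *\<^sub>R c + snd h *\<^sub>R d)) (at (prod.swap (prod.swap p)))"
      using dv by simp
    from has_derivative_compose[OF swap_deriv this] show ?thesis by (simp add: o_def add.commute)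
  qed
  have Us: "open (prod.swap -` U)" "prod.swap p \<in> prod.swap -` U"
    using U by (auto intro: continuous_open_vimage isCont_swap)
  obtain d1 where d1: "d1 > 0" "\<forall>s. 0 < s \<and> s < d1 \<longrightarrow>
      norm (f (p + (s, s)) - f (p + (s, 0)) - f (p + (0, s)) + f p - (s * s) *\<^sub>R b) \<le> 4 * e * (s * s)"
    using mixed_difference_estimate[OF U df du e] by blast
  obtain d2 where d2: "d2 > 0" "\<forall>s. 0 < s \<and> s < d2 \<longrightarrow>
      norm (f (p + (s, s)) - f (p + (0, s)) - f (p + (s, 0)) + f p - (s * s) *\<^sub>R c) \<le> 4 * e * (s * s)"
    using mixed_difference_estimate[OF Us dfs dvs e] by (auto simp: p)
  define s where "s = min d1 d2 / 2"
  have s: "0 < s" "s < d1" "s < d2" using d1 d2 by (auto simp: s_def)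
  define \<Delta> where "\<Delta> = f (p + (s, s)) - f (p + (s, 0)) - f (p + (0, s)) + f p"
  have "norm (\<Delta> - (s * s) *\<^sub>R b) \<le> 4 * e * (s * s)" "norm (\<Delta> - (s * s) *\<^sub>R c) \<le> 4 * e * (s * s)"
    using d1(2) d2(2) s unfolding \<Delta>_def by (auto simp: algebra_simps)
  moreover have "(s * s) * norm (b - c) = norm ((\<Delta> - (s * s) *\<^sub>R c) - (\<Delta> - (s * s) *\<^sub>R b))"
    by (simp add: algebra_simps flip: scaleR_right_diff_distrib)
  ultimately have "norm (b - c) * (s * s) \<le> (8 * e) * (s * s)"
    using norm_triangle_ineq4[of "\<Delta> - (s * s) *\<^sub>R c" "\<Delta> - (s * s) *\<^sub>R b"]
    by (simp add: algebra_simps)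
  then have "norm (b - c) \<le> 8 * e" using s(1) by (simp add: mult_le_cancel_right_pos)
  then show False using e unfolding e_def by simp
qed

section \<open>Linear algebra of a timelike tangent plane\<close>

lemma quadratic_form_indefinite:
  fixes A B C :: real
  assumes neg: "x1 * x1 * A + 2 * x1 * y1 * B + y1 * y1 * C < 0"
    and pos: "x2 * x2 * A + 2 * x2 * y2 * B + y2 * y2 * C > 0"
  shows "A * C - B^2 < 0"
proof (rule ccontr)
  assume "\<not> ?thesis"
  then have D: "A * C - B^2 \<ge> 0" by simp
  have sq: "A * (x * x * A + 2 * x * y * B + y * y * C) = (A * x + B * y)^2 + (A * C - B^2) * y^2"
    for x y by (simp add: power2_eq_square algebra_simps)
  have nonneg: "A * (x * x * A + 2 * x * y * B + y * y * C) \<ge> 0" for x y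
    unfolding sq using D by simp
  have A: "A = 0"
  proof (rule ccontr)
    assume "A \<noteq> 0"
    then show False
      using nonneg[of x1 y1] nonneg[of x2 y2] neg pos mult_pos_neg mult_neg_pos
      by (metis linorder_neqE_linordered_idom not_le)
  qed
  then have "B^2 \<le> 0" using D by simp
  then have "B = 0" by simp
  then have "(y1 * y1 * C) * (y2 * y2 * C) < 0"
    using A neg pos by (simp add: mult_neg_pos)
  moreover have "(y1 * y1 * C) * (y2 * y2 * C) = (y1 * y2 * C)^2"
    by (simp add: power2_eq_square algebra_simps)
  ultimately show False by simp
qed

definition sff_coef :: "jet \<Rightarrow> real^4 \<Rightarrow> real^4 \<Rightarrow> real^4 \<Rightarrow> real" where
  "sff_coef J \<xi> X Y = mink (sff J X Y) \<xi>"

locale timelike_jet =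
  fixes J :: jet
  assumes timelike: "timelike_at J"
begin

abbreviation "u \<equiv> ju J"
abbreviation "v \<equiv> jv J"
abbreviation "gA \<equiv> mink u u"
abbreviation "gB \<equiv> mink u v"
abbreviation "gC \<equiv> mink v v"

lemma tspace_iff: "X \<in> tspace J \<longleftrightarrow> (\<exists>a b. X = a *\<^sub>R u + b *\<^sub>R v)"
proof
  assume "X \<in> tspace J"
  then obtain a b where "X - a *\<^sub>R u = b *\<^sub>R v"
    unfolding tspace_def span_insert span_singleton by auto
  then have "X = a *\<^sub>R u + b *\<^sub>R v" by (simp add: algebra_simps)
  then show "\<exists>a b. X = a *\<^sub>R u + b *\<^sub>R v" by blast
qed (auto simp: tspace_def intro: span_add span_scale span_base)

lemma tspace_add: "X \<in> tspace J \<Longrightarrow> Y \<in> tspace J \<Longrightarrow> X + Y \<in> tspace J"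
  and tspace_diff: "X \<in> tspace J \<Longrightarrow> Y \<in> tspace J \<Longrightarrow> X - Y \<in> tspace J"
  and tspace_scale: "X \<in> tspace J \<Longrightarrow> c *\<^sub>R X \<in> tspace J"
  and tspace_u: "u \<in> tspace J" and tspace_v: "v \<in> tspace J"
  unfolding tspace_def by (auto intro: span_add span_diff span_scale span_base)

lemma mink_comb_frame:
  "mink (a *\<^sub>R u + b *\<^sub>R v) u = a * gA + b * gB"
  "mink (a *\<^sub>R u + b *\<^sub>R v) v = a * gB + b * gC"
  by (simp_all add: mink_lin mink_commute[of v u])

lemma gram_det_neg: "gA * gC - gB^2 < 0"
proof -
  have quad: "mink (a *\<^sub>R u + b *\<^sub>R v) (a *\<^sub>R u + b *\<^sub>R v) = a * a * gA + 2 * a * b * gB + b * b * gC"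
    for a b by (simp add: mink_lin mink_commute[of v u] algebra_simps)
  obtain X Y where "X \<in> tspace J" "mink X X < 0" "Y \<in> tspace J" "mink Y Y > 0"
    using timelike unfolding timelike_at_def by blast
  then obtain a b c d where "mink (a *\<^sub>R u + b *\<^sub>R v) (a *\<^sub>R u + b *\<^sub>R v) < 0"
    "mink (c *\<^sub>R u + d *\<^sub>R v) (c *\<^sub>R u + d *\<^sub>R v) > 0"
    unfolding tspace_iff by blast
  then show ?thesis
    unfolding quad by (rule quadratic_form_indefinite)
qed

lemma gram_kernel_zero:
  assumes "a * gA + b * gB = 0" "a * gB + b * gC = 0"
  shows "a = 0" "b = 0"
proof -
  have D: "gA * gC - gB^2 \<noteq> 0" using gram_det_neg by simp
  have "a * (gA * gC - gB^2) = gC * (a * gA + b * gB) - gB * (a * gB + b * gC)"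
    by (simp add: power2_eq_square algebra_simps)
  then show "a = 0" using assms D by simp
  have "b * (gA * gC - gB^2) = gA * (a * gB + b * gC) - gB * (a * gA + b * gB)"
    by (simp add: power2_eq_square algebra_simps)
  then show "b = 0" using assms D by simp
qed

lemma tangent_orthogonal_eq_zero:
  assumes "X \<in> tspace J" "mink X u = 0" "mink X v = 0"
  shows "X = 0"
proof -
  obtain a b where X: "X = a *\<^sub>R u + b *\<^sub>R v" using assms(1) tspace_iff by blast
  have "a = 0" "b = 0" using gram_kernel_zero assms(2,3) unfolding X mink_comb_frame by blast+
  then show ?thesis using X by simp
qed

lemma tangent_eqI:
  "X \<in> tspace J \<Longrightarrow> Y \<in> tspace J \<Longrightarrow> mink X u = mink Y u \<Longrightarrow> mink X v = mink Y v \<Longrightarrow> X = Y"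
proof -
  assume "X \<in> tspace J" "Y \<in> tspace J" "mink X u = mink Y u" "mink X v = mink Y v"
  then have "X - Y = 0" by (intro tangent_orthogonal_eq_zero) (simp_all add: tspace_diff mink_lin)
  then show ?thesis by simp
qed

lemma comb_frame_inject:
  assumes "a *\<^sub>R u + b *\<^sub>R v = c *\<^sub>R u + d *\<^sub>R v"
  shows "a = c \<and> b = d"
proof -
  have "(a - c) *\<^sub>R u + (b - d) *\<^sub>R v = 0" using assms by (simp add: algebra_simps)
  then have "(a - c) * gA + (b - d) * gB = 0" "(a - c) * gB + (b - d) * gC = 0"
    using mink_comb_frame[of "a - c" "b - d"] by (simp_all add: mink.zero_left)
  then have "a - c = 0" "b - d = 0" by (rule gram_kernel_zero)+
  then show ?thesis by simp
qed

lemma ex_tangent_products: "\<exists>t \<in> tspace J. mink t u = r1 \<and> mink t v = r2"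
proof -
  define D where "D = gA * gC - gB^2"
  have D: "D \<noteq> 0" using gram_det_neg D_def by simp
  define a where "a = (gC * r1 - gB * r2) / D"
  define b where "b = (gA * r2 - gB * r1) / D"
  have "a * gA + b * gB = ((gC * r1 - gB * r2) * gA + (gA * r2 - gB * r1) * gB) / D"
    unfolding a_def b_def by (simp add: add_divide_distrib)
  also have "(gC * r1 - gB * r2) * gA + (gA * r2 - gB * r1) * gB = r1 * D"
    unfolding D_def by (simp add: power2_eq_square algebra_simps)
  finally have 1: "a * gA + b * gB = r1" using D by simp
  have "a * gB + b * gC = ((gC * r1 - gB * r2) * gB + (gA * r2 - gB * r1) * gC) / D"
    unfolding a_def b_def by (simp add: add_divide_distrib)
  also have "(gC * r1 - gB * r2) * gB + (gA * r2 - gB * r1) * gC = r2 * D"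
    unfolding D_def by (simp add: power2_eq_square algebra_simps)
  finally have 2: "a * gB + b * gC = r2" using D by simp
  show ?thesis using 1 2 mink_comb_frame[of a b] tspace_iff by blast
qed

lemma nspace_orthogonal: "\<xi> \<in> nspace J \<Longrightarrow> Y \<in> tspace J \<Longrightarrow> mink Y \<xi> = 0"
  unfolding nspace_def tspace_iff by (auto simp: mink_lin mink_commute[of \<xi>])

lemma nspace_scale: "\<xi> \<in> nspace J \<Longrightarrow> c *\<^sub>R \<xi> \<in> nspace J"
  unfolding nspace_def by (simp add: mink_lin)

lemma nspace_spacelike: "\<xi> \<in> nspace J \<Longrightarrow> mink \<xi> \<xi> \<ge> 0"
proof -
  assume "\<xi> \<in> nspace J"
  moreover obtain X where "X \<in> tspace J" "mink X X < 0"
    using timelike unfolding timelike_at_def by blast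
  ultimately show ?thesis
    using nspace_orthogonal mink_orthogonal_timelike_nonneg mink_commute by metis
qed

lemma tanpart_ex1: "\<exists>!t. t \<in> tspace J \<and> x - t \<in> nspace J"
proof -
  obtain t where t: "t \<in> tspace J" "mink t u = mink x u" "mink t v = mink x v"
    using ex_tangent_products by blast
  then have "x - t \<in> nspace J" unfolding nspace_def by (simp add: mink_lin)
  moreover have "t' = t" if "t' \<in> tspace J" "x - t' \<in> nspace J" for t'
    using that t unfolding nspace_def by (intro tangent_eqI) (simp_all add: mink_lin)
  ultimately show ?thesis using t by blast
qed

lemma tanpart_in_tspace: "tanpart J x \<in> tspace J"
  and norpart_in_nspace: "norpart J x \<in> nspace J"
  using theI'[OF tanpart_ex1] unfolding tanpart_def norpart_def by blast+

lemma mink_norpart: "\<xi> \<in> nspace J \<Longrightarrow> mink (norpart J w) \<xi> = mink w \<xi>"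
  unfolding norpart_def using nspace_orthogonal tanpart_in_tspace by (simp add: mink_lin)

lemma sff_in_nspace: "sff J X Y \<in> nspace J"
  unfolding sff_def by (simp add: norpart_in_nspace split: prod.splits)

lemma coords_comb: "coords J (a *\<^sub>R u + b *\<^sub>R v) = (a, b)"
  unfolding coords_def
proof (rule the1_equality)
  show "\<exists>!ab. a *\<^sub>R u + b *\<^sub>R v = fst ab *\<^sub>R u + snd ab *\<^sub>R v"
    by (rule ex1I[of _ "(a, b)"]) (auto dest: comb_frame_inject)
qed simp

lemma sff_coef_comb:
  assumes "\<xi> \<in> nspace J"
  shows "sff_coef J \<xi> (a *\<^sub>R u + b *\<^sub>R v) (c *\<^sub>R u + d *\<^sub>R v) =
    a * c * mink (juu J) \<xi> + a * d * mink (juv J) \<xi> + b * c * mink (jvu J) \<xi> + b * d * mink (jvv J) \<xi>"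
  unfolding sff_coef_def sff_def coords_comb using assms by (simp add: mink_norpart mink_lin)

lemma sff_coef_bilinear:
  assumes "\<xi> \<in> nspace J" "X1 \<in> tspace J" "X2 \<in> tspace J" "Y1 \<in> tspace J" "Y2 \<in> tspace J"
  shows "sff_coef J \<xi> (p *\<^sub>R X1 + q *\<^sub>R X2) (r *\<^sub>R Y1 + s *\<^sub>R Y2) =
    p * r * sff_coef J \<xi> X1 Y1 + p * s * sff_coef J \<xi> X1 Y2
    + q * r * sff_coef J \<xi> X2 Y1 + q * s * sff_coef J \<xi> X2 Y2"
proof -
  have comb: "p *\<^sub>R (a *\<^sub>R u + b *\<^sub>R v) + q *\<^sub>R (c *\<^sub>R u + d *\<^sub>R v)
      = (p * a + q * c) *\<^sub>R u + (p * b + q * d) *\<^sub>R v" for p q a b c d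
    by (simp add: algebra_simps)
  from assms(2-5) obtain a1 b1 a2 b2 c1 d1 c2 d2 where
    XY: "X1 = a1 *\<^sub>R u + b1 *\<^sub>R v" "X2 = a2 *\<^sub>R u + b2 *\<^sub>R v"
    "Y1 = c1 *\<^sub>R u + d1 *\<^sub>R v" "Y2 = c2 *\<^sub>R u + d2 *\<^sub>R v"
    unfolding tspace_iff by blast
  show ?thesis
    unfolding XY comb sff_coef_comb[OF assms(1)] by (simp add: algebra_simps)
qed

lemma sff_coef_commute:
  assumes "juv J = jvu J" "\<xi> \<in> nspace J" "X \<in> tspace J" "Y \<in> tspace J"
  shows "sff_coef J \<xi> X Y = sff_coef J \<xi> Y X"
proof -
  obtain a b c d where "X = a *\<^sub>R u + b *\<^sub>R v" "Y = c *\<^sub>R u + d *\<^sub>R v"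
    using assms(3,4) tspace_iff by blast
  then show ?thesis by (simp add: sff_coef_comb[OF assms(2)] assms(1) algebra_simps)
qed

lemma shape_ex1:
  assumes "\<xi> \<in> nspace J" "X \<in> tspace J"
  shows "\<exists>!t. t \<in> tspace J \<and> (\<forall>Y\<in>tspace J. mink t Y = mink (sff J X Y) \<xi>)"
proof -
  obtain t where t: "t \<in> tspace J" "mink t u = sff_coef J \<xi> X u" "mink t v = sff_coef J \<xi> X v"
    using ex_tangent_products by blast
  have lin: "sff_coef J \<xi> X (c *\<^sub>R u + d *\<^sub>R v) = c * sff_coef J \<xi> X u + d * sff_coef J \<xi> X v" for c d
    using sff_coef_bilinear[OF assms(1) assms(2) assms(2) tspace_u tspace_v, of 1 0 c d] by simp
  have all: "\<forall>Y\<in>tspace J. mink t Y = mink (sff J X Y) \<xi>"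
  proof
    fix Y assume "Y \<in> tspace J"
    then obtain c d where Y: "Y = c *\<^sub>R u + d *\<^sub>R v" using tspace_iff by blast
    show "mink t Y = mink (sff J X Y) \<xi>"
      using lin[of c d] t unfolding Y sff_coef_def by (simp add: mink_lin)
  qed
  moreover have "t' = t" if "t' \<in> tspace J" "\<forall>Y\<in>tspace J. mink t' Y = mink (sff J X Y) \<xi>" for t'
    using that all t(1) tspace_u tspace_v by (intro tangent_eqI) auto
  ultimately show ?thesis using t(1) by blast
qed

lemma shape_in_tspace: "\<xi> \<in> nspace J \<Longrightarrow> X \<in> tspace J \<Longrightarrow> shape J \<xi> X \<in> tspace J"
  and mink_shape: "\<xi> \<in> nspace J \<Longrightarrow> X \<in> tspace J \<Longrightarrow> Y \<in> tspace J \<Longrightarrow>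
    mink (shape J \<xi> X) Y = sff_coef J \<xi> X Y"
  using theI'[OF shape_ex1] unfolding shape_def[symmetric] sff_coef_def by blast+

lemma sff_coef_linear_left:
  assumes "\<xi> \<in> nspace J" "X1 \<in> tspace J" "X2 \<in> tspace J" "Y \<in> tspace J"
  shows "sff_coef J \<xi> (p *\<^sub>R X1 + q *\<^sub>R X2) Y = p * sff_coef J \<xi> X1 Y + q * sff_coef J \<xi> X2 Y"
  using sff_coef_bilinear[OF assms assms(4), of p q 1 0] by simp

lemma null_frame_expansion:
  assumes T: "T \<in> tspace J" and W: "W \<in> tspace J" and TT: "mink T T = 0" and WW: "mink W W = 0"
    and TW: "mink T W = -1" and y: "y \<in> tspace J"
  shows "y = (- mink y W) *\<^sub>R T + (- mink y T) *\<^sub>R W"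
proof -
  obtain t1 t2 where Tc: "T = t1 *\<^sub>R u + t2 *\<^sub>R v" using T tspace_iff by blast
  obtain w1 w2 where Wc: "W = w1 *\<^sub>R u + w2 *\<^sub>R v" using W tspace_iff by blast
  define \<delta> where "\<delta> = t1 * w2 - t2 * w1"
  have WT: "mink W T = -1" using TW mink_commute by metis
  have dv: "t1 *\<^sub>R W - w1 *\<^sub>R T = \<delta> *\<^sub>R v" and du: "w2 *\<^sub>R T - t2 *\<^sub>R W = \<delta> *\<^sub>R u"
    unfolding Tc Wc \<delta>_def by (simp_all add: algebra_simps)
  have "\<delta> \<noteq> 0"
  proof
    assume "\<delta> = 0"
    then have "mink (t1 *\<^sub>R W - w1 *\<^sub>R T) T = 0" "mink (w2 *\<^sub>R T - t2 *\<^sub>R W) T = 0"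
      using dv du by (simp_all add: mink.zero_left)
    then have "t1 = 0" "t2 = 0" using TT WT by (simp_all add: mink_lin)
    then have "T = 0" using Tc by simp
    then show False using TW by (simp add: mink.zero_left)
  qed
  define r where "r = y + mink y W *\<^sub>R T + mink y T *\<^sub>R W"
  have "mink r T = 0" "mink r W = 0" unfolding r_def using TT WT WW TW by (simp_all add: mink_lin)
  then have "mink r (\<delta> *\<^sub>R u) = 0" "mink r (\<delta> *\<^sub>R v) = 0"
    unfolding du[symmetric] dv[symmetric] by (simp_all add: mink_lin)
  then have "mink r u = 0" "mink r v = 0" using \<open>\<delta> \<noteq> 0\<close> by (simp_all add: mink_lin)
  moreover have "r \<in> tspace J" unfolding r_def using y T W by (intro tspace_add tspace_scale)
  ultimately have "r = 0" using tangent_orthogonal_eq_zero by blast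
  then show ?thesis unfolding r_def by (simp add: algebra_simps eq_neg_iff_add_eq_0)
qed

lemma null_partner_ex1:
  assumes T: "T \<in> tspace J" and lT: "lightlike T"
  shows "\<exists>!w. w \<in> tspace J \<and> lightlike w \<and> mink T w = -1"
proof -
  have TT: "mink T T = 0" and "T \<noteq> 0" using lT unfolding lightlike_def by auto
  then obtain Y where Y: "Y \<in> tspace J" "mink T Y \<noteq> 0"
    using tangent_orthogonal_eq_zero[OF T] tspace_u tspace_v by blast
  define m where "m = mink T Y"
  define w where "w = (-1 / m) *\<^sub>R (Y - (mink Y Y / (2 * m)) *\<^sub>R T)"
  have m: "m \<noteq> 0" using Y m_def by simp
  have YT: "mink Y T = m" using m_def mink_commute by metis
  have ww: "mink w w = 0" unfolding w_def using TT YT m_def m by (simp add: mink_lin field_simps)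
  have Tw: "mink T w = -1" unfolding w_def using m TT m_def by (simp add: mink_lin)
  have wt: "w \<in> tspace J" unfolding w_def using Y T by (intro tspace_scale tspace_diff) auto
  have "w' = w" if w': "w' \<in> tspace J" "lightlike w'" "mink T w' = -1" for w'
  proof -
    define c where "c = mink w' w"
    have "mink w' T = -1" using w' mink_commute by metis
    then have e: "w' = (- c) *\<^sub>R T + w"
      using null_frame_expansion[OF T wt TT ww Tw w'(1)] unfolding c_def by simp
    have "mink w' w' = 2 * c"
      unfolding e using TT Tw ww mink_commute[of w T] by (simp add: mink_lin)
    then have "c = 0" using w'(2) unfolding lightlike_def by simp
    then show ?thesis using e by simp
  qed
  moreover have "w \<noteq> 0" using Tw by (auto simp: mink.zero_right)
  ultimately show ?thesis using wt ww Tw unfolding lightlike_def by blast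
qed

lemma ZT_in_tspace: "ZT J Z \<in> tspace J"
  and ZN_in_nspace: "ZN J Z \<in> nspace J"
  and ZN_eq: "ZN J Z = Z - ZT J Z"
  unfolding ZT_def ZN_def norpart_def by (simp_all add: tanpart_in_tspace norpart_in_nspace[unfolded norpart_def])

lemma Wvec_null_frame:
  assumes "lightlike (ZT J Z)"
  shows "Wvec J Z \<in> tspace J" "mink (Wvec J Z) (Wvec J Z) = 0" "mink (ZT J Z) (Wvec J Z) = -1"
  using theI'[OF null_partner_ex1[OF ZT_in_tspace assms]] unfolding Wvec_def lightlike_def by auto

lemma shape_null_frame:
  assumes "\<xi> \<in> nspace J" "T \<in> tspace J" "W \<in> tspace J" "mink T T = 0" "mink W W = 0"
    "mink T W = -1" "X \<in> tspace J"
  shows "shape J \<xi> X = (- sff_coef J \<xi> X W) *\<^sub>R T + (- sff_coef J \<xi> X T) *\<^sub>R W"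
  using null_frame_expansion[OF assms(2-6) shape_in_tspace[OF assms(1,7)]]
    mink_shape[OF assms(1,7)] assms(2,3) by simp

(* The mixed entries II(T, W) cancel in the commutator. *)
lemma commutator_null_frame:
  assumes sym: "juv J = jvu J" and \<xi>: "\<xi> \<in> nspace J" and \<eta>: "\<eta> \<in> nspace J"
    and T: "T \<in> tspace J" and W: "W \<in> tspace J"
    and TT: "mink T T = 0" and WW: "mink W W = 0" and TW: "mink T W = -1"
  shows "mink (shape J \<xi> (shape J \<eta> ((1 / sqrt 2) *\<^sub>R (T + W)))
      - shape J \<eta> (shape J \<xi> ((1 / sqrt 2) *\<^sub>R (T + W)))) ((1 / sqrt 2) *\<^sub>R (T - W))
    = sff_coef J \<eta> T T * sff_coef J \<xi> W W - sff_coef J \<xi> T T * sff_coef J \<eta> W W"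
proof -
  define k :: real where "k = 1 / sqrt 2"
  have kk: "k * k = 1 / 2" unfolding k_def by (simp add: field_simps)
  define E1 where "E1 = k *\<^sub>R T + k *\<^sub>R W"
  define E2 where "E2 = k *\<^sub>R T + (- k) *\<^sub>R W"
  have E: "(1 / sqrt 2) *\<^sub>R (T + W) = E1" "(1 / sqrt 2) *\<^sub>R (T - W) = E2"
    unfolding E1_def E2_def k_def by (simp_all add: algebra_simps)
  have E1t: "E1 \<in> tspace J" and E2t: "E2 \<in> tspace J"
    unfolding E1_def E2_def using tspace_add[OF tspace_scale[OF T] tspace_scale[OF W]] by blast+
  let ?h = "sff_coef J"
  have WT: "?h \<zeta> W T = ?h \<zeta> T W" if "\<zeta> \<in> nspace J" for \<zeta>
    using sff_coef_commute[OF sym that W T] .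
  have shape_E1: "shape J \<zeta> E1 =
      (- (k * ?h \<zeta> T W + k * ?h \<zeta> W W)) *\<^sub>R T + (- (k * ?h \<zeta> T T + k * ?h \<zeta> T W)) *\<^sub>R W"
    if \<zeta>: "\<zeta> \<in> nspace J" for \<zeta>
    using shape_null_frame[OF \<zeta> T W TT WW TW E1t] WT[OF \<zeta>]
    unfolding E1_def sff_coef_linear_left[OF \<zeta> T W T] sff_coef_linear_left[OF \<zeta> T W W] by simp
  have double_shape: "mink (shape J \<zeta> (shape J \<zeta>' E1)) E2 =
      k * k * (- (?h \<zeta>' T W + ?h \<zeta>' W W) * ?h \<zeta> T T + (?h \<zeta>' T W + ?h \<zeta>' W W) * ?h \<zeta> T W
        - (?h \<zeta>' T T + ?h \<zeta>' T W) * ?h \<zeta> T W + (?h \<zeta>' T T + ?h \<zeta>' T W) * ?h \<zeta> W W)"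
    (is "?lhs = ?rhs") if \<zeta>: "\<zeta> \<in> nspace J" and \<zeta>': "\<zeta>' \<in> nspace J" for \<zeta> \<zeta>'
  proof -
    have "?lhs = ?h \<zeta> (shape J \<zeta>' E1) E2"
      by (rule mink_shape[OF \<zeta> shape_in_tspace[OF \<zeta>' E1t] E2t])
    also have "\<dots> = ?rhs"
      unfolding shape_E1[OF \<zeta>'] E2_def sff_coef_bilinear[OF \<zeta> T W T W] WT[OF \<zeta>]
      by (simp add: algebra_simps)
    finally show ?thesis .
  qed
  show ?thesis
    unfolding E mink.diff_left double_shape[OF \<xi> \<eta>] double_shape[OF \<eta> \<xi>]
    by (simp add: algebra_simps kk)
qed

lemma normal_curvature_eq:
  assumes lT: "lightlike (ZT J Z)" and sym: "juv J = jvu J"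
    and orth: "sff_coef J (ZN J Z) (ZT J Z) (ZT J Z) = 0"
  shows "normal_curvature J Z = acoef J Z * mnorm (sff J (ZT J Z) (ZT J Z))"
proof -
  define T where "T = ZT J Z"
  define II where "II = sff J T T"
  have "mink T T = 0" using lT unfolding T_def lightlike_def by simp
  note frame = ZT_in_tspace[of Z, folded T_def] Wvec_null_frame(1)[OF lT] this
    Wvec_null_frame(2,3)[OF lT, folded T_def]
  have II: "II \<in> nspace J" unfolding II_def by (rule sff_in_nspace)
  have \<nu>: "nuvec J Z = (1 / mnorm II) *\<^sub>R II" unfolding nuvec_def II_def T_def ..
  then have \<nu>n: "nuvec J Z \<in> nspace J" using II nspace_scale by simp
  have "sff_coef J (nuvec J Z) T T = mnorm II"
  proof -
    have "mnorm II * mnorm II = mink II II"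
      unfolding mnorm_def using nspace_spacelike[OF II] by simp
    then show ?thesis
      unfolding sff_coef_def \<nu> II_def[symmetric] mink.scaleR_right
      by (cases "mnorm II = 0") (simp_all add: field_simps)
  qed
  moreover have "normal_curvature J Z = sff_coef J (nuvec J Z) T T * sff_coef J (ZN J Z) (Wvec J Z) (Wvec J Z)
      - sff_coef J (ZN J Z) T T * sff_coef J (nuvec J Z) (Wvec J Z) (Wvec J Z)"
    unfolding normal_curvature_def e1vec_def e2vec_def T_def
    using commutator_null_frame[OF sym ZN_in_nspace \<nu>n frame[unfolded T_def]] .
  ultimately show ?thesis
    using orth unfolding acoef_def sff_coef_def T_def II_def by simp
qed

end

section \<open>Differentiating the length of Z^T\<close>

(* (<u,u> <v,v> - <u,v>^2) <Z^T, Z^T> for the frame u = f_u, v = f_v (ZT_gram_form_eq below),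
   written as a polynomial so that it can be differentiated along the surface. *)
definition ZT_gram_form :: "real^4 \<Rightarrow> real^4 \<Rightarrow> real^4 \<Rightarrow> real" where
  "ZT_gram_form u v Z = mink v v * (mink Z u)^2 - 2 * mink u v * mink Z u * mink Z v + mink u u * (mink Z v)^2"

definition ZT_gram_form_deriv :: "real^4 \<Rightarrow> real^4 \<Rightarrow> real^4 \<Rightarrow> real^4 \<Rightarrow> real^4 \<Rightarrow> real" where
  "ZT_gram_form_deriv u v du dv Z = (2 * mink v dv) * (mink Z u)^2 + mink v v * (2 * mink Z u * mink Z du)
     - 2 * ((mink du v + mink u dv) * mink Z u * mink Z v
            + mink u v * (mink Z du * mink Z v + mink Z u * mink Z dv))
     + (2 * mink u du) * (mink Z v)^2 + mink u u * (2 * mink Z v * mink Z dv)"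

context timelike_jet
begin

lemma mink_Z_frame:
  assumes "ZT J Z = a *\<^sub>R u + b *\<^sub>R v"
  shows "mink Z u = a * gA + b * gB" "mink Z v = a * gB + b * gC"
proof -
  have "mink (Z - ZT J Z) u = 0" "mink (Z - ZT J Z) v = 0"
    using ZN_in_nspace unfolding ZN_eq nspace_def by auto
  then show "mink Z u = a * gA + b * gB" "mink Z v = a * gB + b * gC"
    unfolding assms by (simp_all add: mink_lin mink_commute[of v u])
qed

lemma ZT_gram_form_eq: "ZT_gram_form u v Z = (gA * gC - gB^2) * mink (ZT J Z) (ZT J Z)"
proof -
  obtain a b where T: "ZT J Z = a *\<^sub>R u + b *\<^sub>R v" using ZT_in_tspace tspace_iff by blast
  show ?thesis
    unfolding ZT_gram_form_def mink_Z_frame[OF T] T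
    by (simp add: mink_lin mink_commute[of v u] power2_eq_square algebra_simps)
qed

lemma ZT_gram_form_deriv_eq:
  assumes T: "ZT J Z = a *\<^sub>R u + b *\<^sub>R v"
  shows "ZT_gram_form_deriv u v du dv Z =
    2 * (gA * gC - gB^2) * mink (a *\<^sub>R du + b *\<^sub>R dv) (ZN J Z)
    + 2 * (mink u du * gC + gA * mink v dv - gB * (mink du v + mink u dv)) * mink (ZT J Z) (ZT J Z)"
proof -
  have N: "mink (a *\<^sub>R du + b *\<^sub>R dv) (ZN J Z) = a * mink Z du + b * mink Z dv
      - a * (a * mink u du + b * mink du v) - b * (a * mink u dv + b * mink v dv)"
    unfolding ZN_eq T
    by (simp add: mink_lin mink_commute[of du Z] mink_commute[of dv Z] mink_commute[of du u]
        mink_commute[of dv u] mink_commute[of dv v] algebra_simps)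
  have TT: "mink (ZT J Z) (ZT J Z) = a * a * gA + 2 * a * b * gB + b * b * gC"
    unfolding T by (simp add: mink_lin mink_commute[of v u] algebra_simps)
  show ?thesis
    unfolding ZT_gram_form_deriv_def mink_Z_frame[OF T] N TT
    by (simp add: power2_eq_square algebra_simps)
qed

lemma sff_ZT_orth_ZN:
  assumes lT: "lightlike (ZT J Z)"
    and d1: "ZT_gram_form_deriv u v (juu J) (jvu J) Z = 0"
    and d2: "ZT_gram_form_deriv u v (juv J) (jvv J) Z = 0"
    and Y: "Y \<in> tspace J"
  shows "sff_coef J (ZN J Z) (ZT J Z) Y = 0"
proof -
  obtain a b where T: "ZT J Z = a *\<^sub>R u + b *\<^sub>R v" using ZT_in_tspace tspace_iff by blast
  obtain c d where Y: "Y = c *\<^sub>R u + d *\<^sub>R v" using Y tspace_iff by blast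
  have "mink (ZT J Z) (ZT J Z) = 0" using lT unfolding lightlike_def by simp
  then have "mink (a *\<^sub>R juu J + b *\<^sub>R jvu J) (ZN J Z) = 0" "mink (a *\<^sub>R juv J + b *\<^sub>R jvv J) (ZN J Z) = 0"
    using ZT_gram_form_deriv_eq[OF T] d1 d2 gram_det_neg by auto
  moreover have "sff_coef J (ZN J Z) (ZT J Z) Y =
      c * mink (a *\<^sub>R juu J + b *\<^sub>R jvu J) (ZN J Z) + d * mink (a *\<^sub>R juv J + b *\<^sub>R jvv J) (ZN J Z)"
    unfolding T Y sff_coef_comb[OF ZN_in_nspace] by (simp add: mink_lin algebra_simps)
  ultimately show ?thesis by simp
qed

end

lemma ZT_gram_form_has_derivative:
  fixes fu fv :: "real \<times> real \<Rightarrow> real^4"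
  assumes "(fu has_derivative DU) (at p)" "(fv has_derivative DV) (at p)"
  shows "((\<lambda>q. ZT_gram_form (fu q) (fv q) Z) has_derivative
    (\<lambda>h. ZT_gram_form_deriv (fu p) (fv p) (DU h) (DV h) Z)) (at p)"
proof -
  have Z: "((\<lambda>q. Z) has_derivative (\<lambda>h. 0)) (at p)" by simp
  note uu = mink.FDERIV[OF assms(1) assms(1)] and uv = mink.FDERIV[OF assms(1) assms(2)]
    and vv = mink.FDERIV[OF assms(2) assms(2)]
    and Zu = mink.FDERIV[OF Z assms(1)] and Zv = mink.FDERIV[OF Z assms(2)]
  show ?thesis
    unfolding ZT_gram_form_def power2_eq_square
    by (rule has_derivative_eq_rhs,
        (rule has_derivative_add has_derivative_diff has_derivative_mult uu uv vv Zu Zv has_derivative_const)+)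
      (simp add: ZT_gram_form_deriv_def fun_eq_iff power2_eq_square mink.zero_left
        mink_commute[of "DU _" "fu p"] mink_commute[of "DV _" "fv p"] mink_commute[of "DU _" "fv p"]
        algebra_simps)
qed

lemma ZT_gram_form_deriv_zero:
  fixes fu fv fuu fuv fvu fvv :: "real \<times> real \<Rightarrow> real^4"
  assumes U: "open U" "p \<in> U"
    and du: "(fu has_derivative (\<lambda>h. fst h *\<^sub>R fuu p + snd h *\<^sub>R fuv p)) (at p)"
    and dv: "(fv has_derivative (\<lambda>h. fst h *\<^sub>R fvu p + snd h *\<^sub>R fvv p)) (at p)"
    and zero: "\<forall>q\<in>U. ZT_gram_form (fu q) (fv q) Z = 0"
  shows "ZT_gram_form_deriv (fu p) (fv p) (fuu p) (fvu p) Z = 0"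
    "ZT_gram_form_deriv (fu p) (fv p) (fuv p) (fvv p) Z = 0"
proof -
  have "((\<lambda>q. ZT_gram_form (fu q) (fv q) Z) has_derivative (\<lambda>h. 0)) (at p)"
    by (rule has_derivative_transform_within_open[OF has_derivative_const U]) (simp add: zero)
  from has_derivative_unique[OF ZT_gram_form_has_derivative[OF du dv] this]
  have "ZT_gram_form_deriv (fu p) (fv p) (fst h *\<^sub>R fuu p + snd h *\<^sub>R fuv p)
      (fst h *\<^sub>R fvu p + snd h *\<^sub>R fvv p) Z = 0" for h
    by (simp add: fun_eq_iff)
  from this[of "(1, 0)"] this[of "(0, 1)"] show
    "ZT_gram_form_deriv (fu p) (fv p) (fuu p) (fvu p) Z = 0"
    "ZT_gram_form_deriv (fu p) (fv p) (fuv p) (fvv p) Z = 0"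
    by simp_all
qed

theorem mainTheorem13:
  fixes f fu fv fuu fuv fvu fvv :: "real \<times> real \<Rightarrow> real^4"
    and U :: "(real \<times> real) set" and Z :: "real^4"
  assumes "open U"
    and "\<forall>p\<in>U. (f has_derivative (\<lambda>h. fst h *\<^sub>R fu p + snd h *\<^sub>R fv p)) (at p)"
    and "\<forall>p\<in>U. (fu has_derivative (\<lambda>h. fst h *\<^sub>R fuu p + snd h *\<^sub>R fuv p)) (at p)"
    and "\<forall>p\<in>U. (fv has_derivative (\<lambda>h. fst h *\<^sub>R fvu p + snd h *\<^sub>R fvv p)) (at p)"
    and "continuous_on U fuu" and "continuous_on U fuv"
    and "continuous_on U fvu" and "continuous_on U fvv"
    and "\<forall>p\<in>U. timelike_at (jet_at fu fv fuu fuv fvu fvv p)"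
    and "mink Z Z = 1"
    and "\<forall>p\<in>U. lightlike (ZT (jet_at fu fv fuu fuv fvu fvv p) Z)"
    and "\<forall>p\<in>U. sff (jet_at fu fv fuu fuv fvu fvv p)
                 (ZT (jet_at fu fv fuu fuv fvu fvv p) Z) (ZT (jet_at fu fv fuu fuv fvu fvv p) Z) \<noteq> 0"
  shows "\<forall>p\<in>U. normal_curvature (jet_at fu fv fuu fuv fvu fvv p) Z =
           acoef (jet_at fu fv fuu fuv fvu fvv p) Z *
           mnorm (sff (jet_at fu fv fuu fuv fvu fvv p)
                   (ZT (jet_at fu fv fuu fuv fvu fvv p) Z) (ZT (jet_at fu fv fuu fuv fvu fvv p) Z))"
proof
  fix p assume p: "p \<in> U"
  have tj: "timelike_jet (jet_at fu fv fuu fuv fvu fvv q)" if "q \<in> U" for q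
    using assms(9) that by (simp add: timelike_jet_def)
  have "ZT_gram_form (fu q) (fv q) Z = 0" if "q \<in> U" for q
    using timelike_jet.ZT_gram_form_eq[OF tj[OF that], of Z] assms(11) that
    by (simp add: lightlike_def jet_at_def)
  then have d: "ZT_gram_form_deriv (fu p) (fv p) (fuu p) (fvu p) Z = 0"
    "ZT_gram_form_deriv (fu p) (fv p) (fuv p) (fvv p) Z = 0"
    using ZT_gram_form_deriv_zero[OF assms(1) p] assms(3,4) p by blast+
  have sym: "fuv p = fvu p"
    using mixed_partials_eq[OF assms(1) p assms(2)] assms(3,4) p by blast
  define J where "J = jet_at fu fv fuu fuv fvu fvv p"
  have J: "ju J = fu p" "jv J = fv p" "juu J = fuu p" "juv J = fuv p" "jvu J = fvu p" "jvv J = fvv p"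
    unfolding J_def jet_at_def by simp_all
  interpret timelike_jet J using tj p unfolding J_def .
  have lT: "lightlike (ZT J Z)" using assms(11) p unfolding J_def by blast
  have "sff_coef J (ZN J Z) (ZT J Z) (ZT J Z) = 0"
    using sff_ZT_orth_ZN[OF lT _ _ ZT_in_tspace] d unfolding J .
  moreover have "juv J = jvu J" using sym J by simp
  ultimately show "normal_curvature (jet_at fu fv fuu fuv fvu fvv p) Z =
      acoef (jet_at fu fv fuu fuv fvu fvv p) Z *
      mnorm (sff (jet_at fu fv fuu fuv fvu fvv p)
        (ZT (jet_at fu fv fuu fuv fvu fvv p) Z) (ZT (jet_at fu fv fuu fuv fvu fvv p) Z))"
    using normal_curvature_eq[OF lT] unfolding J_def by blast
qed

end
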